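(* Let $G$ be a finitely generated virtually free group with finite inverse-closed generating set $X$, and let $H$ be a finitely generated subgroup of $G$. Then $\mathsf{GWP}(G,H,X)$ is a deterministic context-free language.
   Context: For a group $G$ with finite generating set $X$ (closed under inverses) and a subgroup $H \le G$, the generalised word problem $\mathsf{GWP}(G,H,X)$ is the set of words over $X$ that represent elements of $H$. A group is virtually free if it has a free subgroup of finite index. A language is deterministic context-free if it is accepted by a deterministic pushdown automaton. *)

theory Defs
  imports "HOL-Algebra.Algebra"
begin

definition word_eval :: "('g, 'b) monoid_scheme \<Rightarrow> 'g list \<Rightarrow> 'g" where
  "word_eval G w = foldr (\<lambda>x y. x \<otimes>\<^bsub>G\<^esub> y) w \<one>\<^bsub>G\<^esub>"

definition GWP :: "('g, 'b) monoid_scheme \<Rightarrow> 'g set \<Rightarrow> 'g set \<Rightarrow> 'g list set" where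
  "GWP G K Y = {w. set w \<subseteq> Y \<and> word_eval G w \<in> K}"

definition signed_eval :: "('g, 'b) monoid_scheme \<Rightarrow> ('g \<times> bool) list \<Rightarrow> 'g" where
  "signed_eval G w = foldr (\<lambda>(b, s) y. (if s then b else inv\<^bsub>G\<^esub> b) \<otimes>\<^bsub>G\<^esub> y) w \<one>\<^bsub>G\<^esub>"

definition freely_reduced :: "('g \<times> bool) list \<Rightarrow> bool" where
  "freely_reduced w = (\<forall>i. Suc i < length w \<longrightarrow>
      \<not> (fst (w ! i) = fst (w ! Suc i) \<and> snd (w ! i) \<noteq> snd (w ! Suc i)))"

definition free_basis :: "('g, 'b) monoid_scheme \<Rightarrow> 'g set \<Rightarrow> bool" where
  "free_basis G B = (B \<subseteq> carrier G \<and> generate G B = carrier G \<and>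
     (\<forall>w. w \<noteq> [] \<and> set (map fst w) \<subseteq> B \<and> freely_reduced w \<longrightarrow> signed_eval G w \<noteq> \<one>\<^bsub>G\<^esub>))"

definition free_group :: "('g, 'b) monoid_scheme \<Rightarrow> bool" where
  "free_group G = (group G \<and> (\<exists>B. free_basis G B))"

definition virtually_free :: "('g, 'b) monoid_scheme \<Rightarrow> bool" where
  "virtually_free G = (group G \<and> (\<exists>F. subgroup F G \<and> finite (rcosets\<^bsub>G\<^esub> F)
      \<and> free_group (G\<lparr>carrier := F\<rparr>)))"

definition fin_gen_subgroup :: "('g, 'b) monoid_scheme \<Rightarrow> 'g set \<Rightarrow> bool" where
  "fin_gen_subgroup G H = (subgroup H G \<and> (\<exists>S. finite S \<and> S \<subseteq> H \<and> generate G S = H))"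

record ('q, 'a, 's) dpda =
  states :: "'q set"
  sigma :: "'a set"
  stack_syms :: "'s set"
  init :: 'q
  init_stack :: 's
  final :: "'q set"
  delta :: "'q \<Rightarrow> 'a option \<Rightarrow> 's \<Rightarrow> ('q \<times> 's list) option"
    \<comment> \<open>None as input means an epsilon move; the result pushes a list (top first)
        replacing the popped top symbol\<close>

definition dpda_wf :: "('q, 'a, 's) dpda \<Rightarrow> bool" where
  "dpda_wf M = (finite (states M) \<and> finite (sigma M) \<and> finite (stack_syms M) \<and>
     init M \<in> states M \<and> init_stack M \<in> stack_syms M \<and> final M \<subseteq> states M \<and>
     (\<forall>q a Z p \<alpha>. delta M q a Z = Some (p, \<alpha>) \<longrightarrow>
        q \<in> states M \<and> Z \<in> stack_syms M \<and> (\<forall>x. a = Some x \<longrightarrow> x \<in> sigma M) \<and>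
        p \<in> states M \<and> set \<alpha> \<subseteq> stack_syms M) \<and>
     (\<forall>q Z. delta M q None Z \<noteq> None \<longrightarrow> (\<forall>a. delta M q (Some a) Z = None)))"

text \<open>One step on configurations (state, remaining input, stack with top first).\<close>
inductive dpda_step :: "('q, 'a, 's) dpda \<Rightarrow> ('q \<times> 'a list \<times> 's list) \<Rightarrow>
    ('q \<times> 'a list \<times> 's list) \<Rightarrow> bool" for M where
  read: "delta M q (Some a) Z = Some (p, \<alpha>) \<Longrightarrow>
     dpda_step M (q, a # w, Z # \<gamma>) (p, w, \<alpha> @ \<gamma>)"
| eps: "delta M q None Z = Some (p, \<alpha>) \<Longrightarrow>
     dpda_step M (q, w, Z # \<gamma>) (p, w, \<alpha> @ \<gamma>)"

definition dpda_lang :: "('q, 'a, 's) dpda \<Rightarrow> 'a list set" where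
  "dpda_lang M = {w. set w \<subseteq> sigma M \<and>
     (\<exists>p \<gamma>. (dpda_step M)\<^sup>*\<^sup>* (init M, w, [init_stack M]) (p, [], \<gamma>) \<and> p \<in> final M)}"

text \<open>A language over alphabet \<Sigma> is deterministic context-free if accepted by a DPDA
  (states and stack symbols can be taken to be natural numbers without loss of generality).\<close>
definition det_context_free :: "'a set \<Rightarrow> 'a list set \<Rightarrow> bool" where
  "det_context_free \<Sigma> L = (\<exists>M :: (nat, 'a, nat) dpda.
     dpda_wf M \<and> sigma M = \<Sigma> \<and> dpda_lang M = L)"

end

theory Submission
  imports Defs "HOL-Library.Sublist"
begin

text \<open>Let \<open>F\<close> be a free subgroup of finite index in \<open>G\<close> with basis \<open>B\<close>, and fix representatives
  \<open>rep g\<close> of the cosets \<open>F g\<close>. After reading a word with value \<open>g\<close>, the automaton keeps \<open>rep g\<close>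
  in its finite control and the freely reduced word over \<open>B\<close> for \<open>g (rep g)\<inverse>\<close> on its stack.
  Reading a letter \<open>x\<close> multiplies the stacked element by the Schreier generator
  \<open>rep g \<cdot> x \<cdot> rep (g x)\<inverse>\<close>, of which there are finitely many, so its normal form can be pushed
  letter by letter with free cancellation. To decide \<open>g \<in> H\<close>, each stack letter carries the state of
  a finite automaton tracking the coset of \<open>H\<close> containing the prefix below it: for \<open>h \<in> H\<close>, every
  prefix of the normal form of \<open>h (rep h)\<inverse>\<close> lies in one of finitely many cosets \<open>H q\<close>, because
  multiplying \<open>h\<close> by a generator of \<open>H\<close> only adds prefixes coming from the normal forms of
  finitely many Schreier generators.\<close>

section \<open>Free reduction of signed words\<close>

definition inv_letter :: "'g \<times> bool \<Rightarrow> 'g \<times> bool" where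
  "inv_letter y = (fst y, \<not> snd y)"

lemma inv_letter_inv_letter [simp]: "inv_letter (inv_letter y) = y"
  by (simp add: inv_letter_def)

lemma inv_letter_eq_iff [simp]: "inv_letter x = inv_letter y \<longleftrightarrow> x = y"
  by (metis inv_letter_inv_letter)

lemma fst_inv_letter [simp]: "fst (inv_letter y) = fst y"
  by (simp add: inv_letter_def)

definition inv_word :: "('g \<times> bool) list \<Rightarrow> ('g \<times> bool) list" where
  "inv_word w = rev (map inv_letter w)"

lemma inv_word_Nil [simp]: "inv_word [] = []"
  by (simp add: inv_word_def)

lemma inv_word_Cons [simp]: "inv_word (y # w) = inv_word w @ [inv_letter y]"
  by (simp add: inv_word_def)

lemma letters_inv_word [simp]: "fst ` set (inv_word w) = fst ` set w"
  by (force simp: inv_word_def)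

lemma freely_reduced_iff_nth:
  "freely_reduced w \<longleftrightarrow> (\<forall>i. Suc i < length w \<longrightarrow> w ! Suc i \<noteq> inv_letter (w ! i))"
  unfolding freely_reduced_def inv_letter_def by (auto simp: prod_eq_iff)

lemma freely_reduced_Nil [simp]: "freely_reduced []"
  by (simp add: freely_reduced_iff_nth)

lemma freely_reduced_single [simp]: "freely_reduced [y]"
  by (simp add: freely_reduced_iff_nth)

lemma freely_reduced_snoc:
  "freely_reduced (w @ [y]) \<longleftrightarrow> freely_reduced w \<and> (w \<noteq> [] \<longrightarrow> y \<noteq> inv_letter (last w))"
proof (cases w rule: rev_cases)
  case (snoc v x)
  have "(\<forall>i. Suc i < length w + 1 \<longrightarrow> P i) \<longleftrightarrow> (\<forall>i. Suc i < length w \<longrightarrow> P i) \<and> P (length v)" for P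
    using snoc by (auto simp: less_Suc_eq)
  then show ?thesis
    unfolding freely_reduced_iff_nth using snoc by (simp add: nth_append)
qed simp

lemma freely_reduced_append:
  "freely_reduced (v @ w) \<longleftrightarrow> freely_reduced v \<and> freely_reduced w \<and>
     (v \<noteq> [] \<and> w \<noteq> [] \<longrightarrow> hd w \<noteq> inv_letter (last v))"
proof (induction w rule: rev_induct)
  case (snoc y w)
  then show ?case
    using freely_reduced_snoc[of "v @ w" y] freely_reduced_snoc[of w y]
    by (cases "w = []") (auto simp: freely_reduced_snoc)
qed simp

lemma freely_reduced_inv_word: "freely_reduced w \<Longrightarrow> freely_reduced (inv_word w)"
proof (induction w rule: rev_induct)
  case (snoc y w)
  then show ?case
    using freely_reduced_snoc[of w y] freely_reduced_append[of "[inv_letter y]" "inv_word w"]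
    by (auto simp: inv_word_def hd_rev last_map)
qed (simp add: inv_word_def)

definition reduce_snoc :: "('g \<times> bool) list \<Rightarrow> 'g \<times> bool \<Rightarrow> ('g \<times> bool) list" where
  "reduce_snoc w y = (if w \<noteq> [] \<and> last w = inv_letter y then butlast w else w @ [y])"

lemma freely_reduced_reduce_snoc:
  assumes "freely_reduced w" shows "freely_reduced (reduce_snoc w y)"
proof (cases "w \<noteq> [] \<and> last w = inv_letter y")
  case True
  then have "w = butlast w @ [last w]" by (metis append_butlast_last_id)
  then show ?thesis using assms True freely_reduced_snoc unfolding reduce_snoc_def by metis
next
  case False
  then have "freely_reduced (w @ [y])" using assms freely_reduced_snoc by (metis inv_letter_inv_letter)
  then show ?thesis unfolding reduce_snoc_def if_not_P[OF False] .
qed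

lemma freely_reduced_foldl_reduce_snoc:
  "freely_reduced v \<Longrightarrow> freely_reduced (foldl reduce_snoc v w)"
  by (induction w arbitrary: v) (auto simp: freely_reduced_reduce_snoc)

lemma set_reduce_snoc: "set (reduce_snoc w y) \<subseteq> set w \<union> {y}"
  unfolding reduce_snoc_def by (auto dest: in_set_butlastD)

lemma set_foldl_reduce_snoc: "set (foldl reduce_snoc v w) \<subseteq> set v \<union> set w"
proof (induction w arbitrary: v)
  case (Cons y w)
  then show ?case using set_reduce_snoc[of v y] by fastforce
qed simp

lemma letters_foldl_reduce_snoc:
  "fst ` set v \<subseteq> L \<Longrightarrow> fst ` set w \<subseteq> L \<Longrightarrow> fst ` set (foldl reduce_snoc v w) \<subseteq> L"
  using set_foldl_reduce_snoc[of v w] by blast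

lemma prefix_reduce_snoc:
  "prefix p (reduce_snoc w y) \<Longrightarrow> prefix p w \<or> p = w @ [y]"
  unfolding reduce_snoc_def
  by (auto split: if_splits intro: prefix_order.trans prefixeq_butlast)

context group
begin

lemma m_inv_cancel_left [simp]: "a \<in> carrier G \<Longrightarrow> b \<in> carrier G \<Longrightarrow> a \<otimes> (inv a \<otimes> b) = b"
  by (simp add: m_assoc[symmetric])

lemma inv_m_cancel_left [simp]: "a \<in> carrier G \<Longrightarrow> b \<in> carrier G \<Longrightarrow> inv a \<otimes> (a \<otimes> b) = b"
  by (simp add: m_assoc[symmetric])

lemma signed_eval_Nil [simp]: "signed_eval G [] = \<one>"
  by (simp add: signed_eval_def)

lemma signed_eval_Cons:
  "signed_eval G (y # w) = (if snd y then fst y else inv (fst y)) \<otimes> signed_eval G w"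
  by (cases y) (simp add: signed_eval_def)

lemma signed_eval_closed [simp]: "fst ` set w \<subseteq> carrier G \<Longrightarrow> signed_eval G w \<in> carrier G"
  by (induction w) (auto simp: signed_eval_Cons)

lemma signed_eval_append:
  "fst ` set u \<subseteq> carrier G \<Longrightarrow> fst ` set w \<subseteq> carrier G \<Longrightarrow>
     signed_eval G (u @ w) = signed_eval G u \<otimes> signed_eval G w"
  by (induction u) (auto simp: signed_eval_Cons m_assoc)

lemma signed_eval_inv_letter:
  "fst y \<in> carrier G \<Longrightarrow> signed_eval G [inv_letter y] = inv (signed_eval G [y])"
  by (cases y) (auto simp: signed_eval_Cons inv_letter_def)

lemma signed_eval_inv_word:
  "fst ` set w \<subseteq> carrier G \<Longrightarrow> signed_eval G (inv_word w) = inv (signed_eval G w)"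
proof (induction w)
  case (Cons y w)
  have "signed_eval G (inv_word (y # w)) = signed_eval G (inv_word w) \<otimes> inv (signed_eval G [y])"
    using Cons.prems by (simp add: signed_eval_append signed_eval_inv_letter)
  also have "\<dots> = inv (signed_eval G [y] \<otimes> signed_eval G w)"
    using Cons by (simp add: inv_mult_group)
  finally show ?case using Cons.prems signed_eval_append[of "[y]" w] by simp
qed (simp add: inv_word_def)

lemma signed_eval_reduce_snoc:
  assumes "fst ` set w \<subseteq> carrier G" "fst y \<in> carrier G"
  shows "signed_eval G (reduce_snoc w y) = signed_eval G w \<otimes> signed_eval G [y]"
proof (cases "w \<noteq> [] \<and> last w = inv_letter y")
  case True
  then obtain u where w: "w = u @ [inv_letter y]" by (metis append_butlast_last_id)
  have "signed_eval G w \<otimes> signed_eval G [y] = signed_eval G u \<otimes> (inv (signed_eval G [y]) \<otimes> signed_eval G [y])"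
    using assms by (simp add: w signed_eval_append signed_eval_inv_letter m_assoc)
  then show ?thesis using assms w by (simp add: reduce_snoc_def)
qed (use assms in \<open>auto simp: reduce_snoc_def signed_eval_append\<close>)

lemma signed_eval_foldl_reduce_snoc:
  "fst ` set u \<subseteq> carrier G \<Longrightarrow> fst ` set w \<subseteq> carrier G \<Longrightarrow>
     signed_eval G (foldl reduce_snoc u w) = signed_eval G u \<otimes> signed_eval G w"
proof (induction w arbitrary: u)
  case (Cons y w)
  have "fst ` set (reduce_snoc u y) \<subseteq> carrier G" using set_reduce_snoc[of u y] Cons.prems by auto
  then show ?case using Cons signed_eval_append[of "[y]" w]
    by (simp add: signed_eval_reduce_snoc m_assoc)
qed simp

lemma prefix_foldl_reduce_snoc:
  assumes "fst ` set u \<subseteq> carrier G" "fst ` set w \<subseteq> carrier G" "prefix p (foldl reduce_snoc u w)"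
  shows "prefix p u \<or> (\<exists>w'. prefix w' w \<and> signed_eval G p = signed_eval G u \<otimes> signed_eval G w')"
  using assms
proof (induction w arbitrary: p rule: rev_induct)
  case (snoc y w)
  let ?u = "foldl reduce_snoc u w"
  have "fst ` set ?u \<subseteq> carrier G" using snoc.prems letters_foldl_reduce_snoc[of u _ w] by auto
  consider "prefix p ?u" | "p = ?u @ [y]" using snoc.prems(3) prefix_reduce_snoc by fastforce
  then show ?case
  proof cases
    case 1
    then show ?thesis using snoc.IH[of p] snoc.prems by (auto intro: prefix_order.trans)
  next
    case 2
    then have "signed_eval G p = signed_eval G u \<otimes> signed_eval G (w @ [y])"
      using snoc.prems \<open>fst ` set ?u \<subseteq> carrier G\<close>
      by (simp add: signed_eval_append signed_eval_foldl_reduce_snoc m_assoc)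
    then show ?thesis by blast
  qed
qed simp

text \<open>If \<open>u \<noteq> w\<close> have the same value, either their last letters agree and induction applies,
  or \<open>u w\<inverse>\<close> is a nonempty freely reduced word with value \<open>\<one>\<close>.\<close>

lemma freely_reduced_eval_inj:
  assumes "L \<subseteq> carrier G"
    and free: "\<And>w. w \<noteq> [] \<Longrightarrow> fst ` set w \<subseteq> L \<Longrightarrow> freely_reduced w \<Longrightarrow> signed_eval G w \<noteq> \<one>"
  shows "freely_reduced u \<Longrightarrow> freely_reduced w \<Longrightarrow> fst ` set u \<subseteq> L \<Longrightarrow> fst ` set w \<subseteq> L \<Longrightarrow>
    signed_eval G u = signed_eval G w \<Longrightarrow> u = w"
proof (induction "length u + length w" arbitrary: u w rule: less_induct)
  case less
  have carr: "fst ` set u \<subseteq> carrier G" "fst ` set w \<subseteq> carrier G" using less.prems assms(1) by auto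
  show ?case
  proof (cases "u \<noteq> [] \<and> w \<noteq> [] \<and> last u = last w")
    case True
    then obtain u' w' y where uw: "u = u' @ [y]" "w = w' @ [y]" by (metis append_butlast_last_id)
    have "signed_eval G u' = signed_eval G w'"
      using less.prems(5) carr by (simp add: uw signed_eval_append)
    moreover have "freely_reduced u'" "freely_reduced w'"
      using less.prems(1,2) by (simp_all add: uw freely_reduced_snoc)
    ultimately show ?thesis using less.hyps[of u' w'] less.prems by (simp add: uw)
  next
    case False
    show ?thesis
    proof (rule ccontr)
      assume "u \<noteq> w"
      then have "u @ inv_word w \<noteq> []" by (auto simp: inv_word_def)
      moreover have "fst ` set (u @ inv_word w) \<subseteq> L" using less.prems by (simp add: image_Un)
      moreover have "freely_reduced (u @ inv_word w)"
        using False less.prems(1,2) freely_reduced_inv_word[of w]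
        by (auto simp: freely_reduced_append inv_word_def hd_rev last_map)
      moreover have "signed_eval G (u @ inv_word w) = \<one>"
        using carr less.prems(5) by (simp add: signed_eval_append signed_eval_inv_word)
      ultimately show False using free by blast
    qed
  qed
qed

lemma signed_eval_in_subgroup:
  "subgroup F G \<Longrightarrow> fst ` set w \<subseteq> F \<Longrightarrow> signed_eval G w \<in> F"
  by (induction w) (auto simp: signed_eval_Cons subgroup.m_closed subgroup.m_inv_closed subgroup.one_closed)

lemma signed_eval_subgroup:
  "subgroup F G \<Longrightarrow> fst ` set w \<subseteq> F \<Longrightarrow> signed_eval (G\<lparr>carrier := F\<rparr>) w = signed_eval G w"
  by (induction w) (auto simp: signed_eval_def split: prod.splits)

lemma word_eval_closed: "set w \<subseteq> carrier G \<Longrightarrow> word_eval G w \<in> carrier G"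
  by (induction w) (auto simp: word_eval_def)

lemma word_eval_snoc:
  "set w \<subseteq> carrier G \<Longrightarrow> x \<in> carrier G \<Longrightarrow> word_eval G (w @ [x]) = word_eval G w \<otimes> x"
  by (induction w) (auto simp: word_eval_def m_assoc word_eval_closed[unfolded word_eval_def])

end

section \<open>A transversal of a subgroup of finite index\<close>

locale finite_index_subgroup = group +
  fixes F :: "'a set"
  assumes subgroup_F: "subgroup F G" and finite_rcosets_F: "finite (rcosets F)"
begin

lemma F_subset_carrier: "F \<subseteq> carrier G"
  using subgroup_F by (rule subgroup.subset)

definition rep :: "'a \<Rightarrow> 'a" where
  "rep g = (if \<one> \<in> F #> g then \<one> else (SOME r. r \<in> F #> g))"

definition transversal :: "'a set" where
  "transversal = rep ` carrier G"

definition schreier :: "'a \<Rightarrow> 'a \<Rightarrow> 'a" where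
  "schreier t x = t \<otimes> x \<otimes> inv (rep (t \<otimes> x))"

lemma rep_in_rcos: "g \<in> carrier G \<Longrightarrow> rep g \<in> F #> g"
  using rcos_self[OF _ subgroup_F, of g] unfolding rep_def by (auto intro: someI)

lemma rep_closed [simp]: "g \<in> carrier G \<Longrightarrow> rep g \<in> carrier G"
  by (rule subgroup.elemrcos_carrier[OF subgroup_F is_group _ rep_in_rcos])

lemma mult_inv_rep_in_F: assumes "g \<in> carrier G" shows "g \<otimes> inv (rep g) \<in> F"
proof -
  obtain f where f: "f \<in> F" "rep g = f \<otimes> g" using rep_in_rcos[OF assms] unfolding r_coset_def by blast
  then have "g \<otimes> inv (rep g) = inv f"
    using assms F_subset_carrier by (auto simp: inv_mult_group m_assoc[symmetric])
  then show ?thesis using subgroup.m_inv_closed[OF subgroup_F f(1)] by simp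
qed

lemma rep_one [simp]: "rep \<one> = \<one>"
  unfolding rep_def using rcos_self[OF one_closed subgroup_F] by simp

lemma rep_mult_F: assumes "f \<in> F" "g \<in> carrier G" shows "rep (f \<otimes> g) = rep g"
proof -
  have "F #> (f \<otimes> g) = (F #> f) #> g" using assms F_subset_carrier by (simp add: coset_mult_assoc subsetD)
  then show ?thesis using subgroup.rcos_const[OF subgroup_F is_group assms(1)] by (simp add: rep_def)
qed

lemma finite_transversal: "finite transversal"
proof -
  have "transversal \<subseteq> (\<lambda>C. if \<one> \<in> C then \<one> else (SOME r. r \<in> C)) ` (rcosets F)"
    unfolding transversal_def rep_def using rcosetsI[OF F_subset_carrier] by auto
  then show ?thesis using finite_subset finite_rcosets_F by blast
qed

lemma rep_in_transversal: "g \<in> carrier G \<Longrightarrow> rep g \<in> transversal"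
  unfolding transversal_def by blast

lemma transversal_closed: "transversal \<subseteq> carrier G"
  unfolding transversal_def by auto

lemma schreier_in_F: "t \<in> carrier G \<Longrightarrow> x \<in> carrier G \<Longrightarrow> schreier t x \<in> F"
  unfolding schreier_def using mult_inv_rep_in_F by simp

lemma rep_mult_rep:
  assumes "g \<in> carrier G" "x \<in> carrier G" shows "rep (rep g \<otimes> x) = rep (g \<otimes> x)"
proof -
  have "g \<otimes> x = g \<otimes> inv (rep g) \<otimes> (rep g \<otimes> x)" using assms by (simp add: m_assoc)
  then show ?thesis using rep_mult_F[OF mult_inv_rep_in_F] assms by simp
qed

lemma mult_inv_rep_mult_schreier:
  assumes "g \<in> carrier G" "x \<in> carrier G"
  shows "g \<otimes> inv (rep g) \<otimes> schreier (rep g) x = g \<otimes> x \<otimes> inv (rep (g \<otimes> x))"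
  using assms by (simp add: schreier_def rep_mult_rep m_assoc[symmetric])
    (simp add: m_assoc)

end

section \<open>Normal forms in a free subgroup of finite index\<close>

lemma (in group) free_basis_subgroup:
  assumes "subgroup F G" "free_basis (G\<lparr>carrier := F\<rparr>) B"
  shows "B \<subseteq> F" "generate (G\<lparr>carrier := F\<rparr>) B = F"
    and "\<And>w. w \<noteq> [] \<Longrightarrow> fst ` set w \<subseteq> B \<Longrightarrow> freely_reduced w \<Longrightarrow> signed_eval G w \<noteq> \<one>"
proof -
  show B: "B \<subseteq> F" "generate (G\<lparr>carrier := F\<rparr>) B = F" using assms(2) by (auto simp: free_basis_def)
  fix w assume "w \<noteq> []" "fst ` set w \<subseteq> B" "freely_reduced w"
  moreover have "signed_eval (G\<lparr>carrier := F\<rparr>) w = signed_eval G w"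
    using signed_eval_subgroup assms(1) B(1) \<open>fst ` set w \<subseteq> B\<close> by blast
  ultimately show "signed_eval G w \<noteq> \<one>" using assms(2) by (auto simp: free_basis_def)
qed

locale virtually_free_group = finite_index_subgroup +
  fixes B :: "'a set"
  assumes basis_subset: "B \<subseteq> F" and basis_generates: "generate (G\<lparr>carrier := F\<rparr>) B = F"
    and basis_free: "\<And>w. w \<noteq> [] \<Longrightarrow> fst ` set w \<subseteq> B \<Longrightarrow> freely_reduced w \<Longrightarrow> signed_eval G w \<noteq> \<one>"
begin

lemma basis_closed: "B \<subseteq> carrier G"
  using basis_subset F_subset_carrier by blast

lemma exists_normal_form:
  assumes "g \<in> F" shows "\<exists>w. freely_reduced w \<and> fst ` set w \<subseteq> B \<and> signed_eval G w = g"
proof -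
  have "g \<in> generate (G\<lparr>carrier := F\<rparr>) B" using assms basis_generates by simp
  then show ?thesis
  proof (induction rule: generate.induct)
    case one
    then show ?case by (intro exI[of _ "[]"]) simp
  next
    case (incl h)
    then show ?case using basis_closed by (intro exI[of _ "[(h, True)]"]) (auto simp: signed_eval_Cons)
  next
    case (inv h)
    then show ?case using basis_closed basis_subset
      by (intro exI[of _ "[(h, False)]"]) (auto simp: signed_eval_Cons subgroup_F subsetD)
  next
    case (eng h1 h2)
    then obtain w1 w2 where "freely_reduced w1" "fst ` set w1 \<subseteq> B" "signed_eval G w1 = h1"
      "freely_reduced w2" "fst ` set w2 \<subseteq> B" "signed_eval G w2 = h2" by auto
    then show ?case using basis_closed
      by (intro exI[of _ "foldl reduce_snoc w1 w2"])
        (auto simp: freely_reduced_foldl_reduce_snoc letters_foldl_reduce_snoc signed_eval_foldl_reduce_snoc)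
  qed
qed

definition normal_form :: "'a \<Rightarrow> ('a \<times> bool) list" where
  "normal_form g = (SOME w. freely_reduced w \<and> fst ` set w \<subseteq> B \<and> signed_eval G w = g)"

lemma normal_form:
  "g \<in> F \<Longrightarrow> freely_reduced (normal_form g) \<and> fst ` set (normal_form g) \<subseteq> B \<and>
     signed_eval G (normal_form g) = g"
  unfolding normal_form_def using exists_normal_form by (rule someI_ex)

lemma normal_form_signed_eval:
  assumes "freely_reduced w" "fst ` set w \<subseteq> B" shows "normal_form (signed_eval G w) = w"
proof -
  have "signed_eval G w \<in> F" using assms(2) basis_subset signed_eval_in_subgroup[OF subgroup_F] by blast
  then show ?thesis
    using normal_form freely_reduced_eval_inj[OF basis_closed basis_free] assms by blast
qed

lemma normal_form_one [simp]: "normal_form \<one> = []"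
  using normal_form_signed_eval[of "[]"] by simp

lemma normal_form_closed: "g \<in> F \<Longrightarrow> fst ` set (normal_form g) \<subseteq> carrier G"
  using normal_form basis_closed by blast

lemma normal_form_mult:
  assumes "g \<in> carrier G" "x \<in> carrier G"
  shows "normal_form (g \<otimes> x \<otimes> inv (rep (g \<otimes> x))) =
    foldl reduce_snoc (normal_form (g \<otimes> inv (rep g))) (normal_form (schreier (rep g) x))"
    (is "_ = foldl reduce_snoc ?f ?u")
proof -
  have f: "freely_reduced ?f" "fst ` set ?f \<subseteq> B" "signed_eval G ?f = g \<otimes> inv (rep g)"
    using normal_form mult_inv_rep_in_F assms by blast+
  have u: "freely_reduced ?u" "fst ` set ?u \<subseteq> B" "signed_eval G ?u = schreier (rep g) x"
    using normal_form schreier_in_F assms by (meson rep_closed)+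
  have "signed_eval G (foldl reduce_snoc ?f ?u) = g \<otimes> x \<otimes> inv (rep (g \<otimes> x))"
    using f u basis_closed assms
    by (simp add: signed_eval_foldl_reduce_snoc mult_inv_rep_mult_schreier subset_trans)
  then show ?thesis using f u normal_form_signed_eval
    by (metis freely_reduced_foldl_reduce_snoc letters_foldl_reduce_snoc)
qed

end

section \<open>Prefixes of normal forms of elements of a finitely generated subgroup\<close>

locale gwp_setting = virtually_free_group +
  fixes A H S :: "'a set"
  assumes finite_A: "finite A" and A_closed: "A \<subseteq> carrier G"
    and subgroup_H: "subgroup H G" and finite_S: "finite S" and S_generates: "generate G S = H"
begin

lemma H_subset_carrier: "H \<subseteq> carrier G"
  using subgroup_H by (rule subgroup.subset)

lemma S_subset_H: "S \<subseteq> H"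
  unfolding S_generates[symmetric] by (auto intro: generate.incl)

lemma H_mult: "x \<in> H \<Longrightarrow> y \<in> H \<Longrightarrow> x \<otimes> y \<in> H"
  by (rule subgroup.m_closed[OF subgroup_H])

lemma H_inv: "x \<in> H \<Longrightarrow> inv x \<in> H"
  by (rule subgroup.m_inv_closed[OF subgroup_H])

lemma H_one: "\<one> \<in> H"
  by (rule subgroup.one_closed[OF subgroup_H])

definition symmetric_generators :: "'a set" where
  "symmetric_generators = S \<union> (\<lambda>x. inv x) ` S"

lemma symmetric_generators_closed: "symmetric_generators \<subseteq> carrier G"
  unfolding symmetric_generators_def using S_subset_H H_subset_carrier by auto

definition witnesses :: "'a set" where
  "witnesses = insert \<one> (\<Union>t\<in>transversal. \<Union>s\<in>symmetric_generators.
     (\<lambda>p. inv t \<otimes> signed_eval G p) ` {p. prefix p (normal_form (schreier t s))})"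

lemma finite_witnesses: "finite witnesses"
proof -
  have "{p. prefix p w} = set (prefixes w)" for w :: "('a \<times> bool) list" by auto
  moreover have "finite symmetric_generators" using finite_S by (simp add: symmetric_generators_def)
  ultimately show ?thesis unfolding witnesses_def using finite_transversal by simp
qed

lemma witnesses_closed: "witnesses \<subseteq> carrier G"
proof -
  have "fst ` set p \<subseteq> carrier G" if "t \<in> transversal" "s \<in> symmetric_generators"
      "prefix p (normal_form (schreier t s))" for t s p
  proof -
    have "schreier t s \<in> F"
      using that(1,2) transversal_closed symmetric_generators_closed by (intro schreier_in_F) auto
    then show ?thesis using normal_form_closed set_mono_prefix[OF that(3)] by (meson image_mono order_trans)
  qed
  then show ?thesis unfolding witnesses_def using transversal_closed by auto
qed

definition prefixes_witnessed :: "'a \<Rightarrow> bool" where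
  "prefixes_witnessed h \<longleftrightarrow> (\<forall>p. prefix p (normal_form (h \<otimes> inv (rep h))) \<longrightarrow>
     (\<exists>q\<in>witnesses. signed_eval G p \<otimes> inv q \<in> H))"

lemma prefixes_witnessed_one: "prefixes_witnessed \<one>"
  unfolding prefixes_witnessed_def witnesses_def using H_one by auto

text \<open>A new prefix \<open>f w'\<close> of the normal form of \<open>k s (rep (k s))\<inverse>\<close> lies in \<open>H q\<close> for
  \<open>q = t\<inverse> w'\<close>, as \<open>f w' q\<inverse> = f t = k\<close>.\<close>

lemma prefixes_witnessed_mult:
  assumes k: "k \<in> H" "prefixes_witnessed k" and s: "s \<in> symmetric_generators"
  shows "prefixes_witnessed (k \<otimes> s)"
proof -
  have kc: "k \<in> carrier G" and sc: "s \<in> carrier G"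
    using k s symmetric_generators_closed H_subset_carrier by auto
  define t where "t = rep k"
  define f where "f = normal_form (k \<otimes> inv t)"
  define u where "u = normal_form (schreier t s)"
  have t: "t \<in> transversal" "t \<in> carrier G" using kc rep_in_transversal by (auto simp: t_def)
  have f: "fst ` set f \<subseteq> carrier G" "signed_eval G f = k \<otimes> inv t"
    using normal_form normal_form_closed mult_inv_rep_in_F[OF kc] by (auto simp: f_def t_def)
  have u: "fst ` set u \<subseteq> carrier G"
    using normal_form_closed[OF schreier_in_F[OF t(2) sc]] by (simp add: u_def)
  show ?thesis unfolding prefixes_witnessed_def normal_form_mult[OF kc sc]
  proof (intro allI impI)
    fix p assume "prefix p (foldl reduce_snoc (normal_form (k \<otimes> inv (rep k))) (normal_form (schreier (rep k) s)))"
    then consider "prefix p f" | w' where "prefix w' u" "signed_eval G p = signed_eval G f \<otimes> signed_eval G w'"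
      using prefix_foldl_reduce_snoc[OF f(1) u] by (auto simp: f_def u_def t_def)
    then show "\<exists>q\<in>witnesses. signed_eval G p \<otimes> inv q \<in> H"
    proof cases
      case 1
      then show ?thesis using k(2) by (auto simp: prefixes_witnessed_def f_def t_def)
    next
      case 2
      have w': "fst ` set w' \<subseteq> carrier G" using u 2(1) set_mono_prefix by blast
      have "inv t \<otimes> signed_eval G w' \<in> witnesses"
        unfolding witnesses_def using t(1) s 2(1) u_def by blast
      moreover have "signed_eval G p \<otimes> inv (inv t \<otimes> signed_eval G w') = k"
        using 2(2) f t(2) w' kc by (simp add: inv_mult_group m_assoc)
      ultimately show ?thesis using k(1) by metis
    qed
  qed
qed

lemma prefixes_witnessed_H:
  assumes "h \<in> H" shows "prefixes_witnessed h"
proof -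
  have "\<forall>k\<in>H. prefixes_witnessed k \<longrightarrow> prefixes_witnessed (k \<otimes> h)" if "h \<in> generate G S" for h
    using that
  proof (induction rule: generate.induct)
    case one
    then show ?case using H_subset_carrier by auto
  next
    case (incl h)
    then show ?case using prefixes_witnessed_mult by (auto simp: symmetric_generators_def)
  next
    case (inv h)
    then show ?case using prefixes_witnessed_mult by (auto simp: symmetric_generators_def)
  next
    case (eng h1 h2)
    have h: "h1 \<in> H" "h2 \<in> H" using eng.hyps S_generates by auto
    show ?case
    proof (intro ballI impI)
      fix k assume "k \<in> H" "prefixes_witnessed k"
      then have "prefixes_witnessed (k \<otimes> h1 \<otimes> h2)" using eng.IH H_mult h by blast
      moreover have "k \<in> carrier G" "h1 \<in> carrier G" "h2 \<in> carrier G"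
        using \<open>k \<in> H\<close> h H_subset_carrier by auto
      ultimately show "prefixes_witnessed (k \<otimes> (h1 \<otimes> h2))" by (simp add: m_assoc)
    qed
  qed
  moreover have "h \<in> carrier G" using assms H_subset_carrier by auto
  ultimately show ?thesis using assms S_generates prefixes_witnessed_one H_one by force
qed
end

section \<open>A finite automaton reading normal forms\<close>

context gwp_setting
begin

text \<open>The state is a witness \<open>q\<close> with the word read so far in \<open>H q\<close>; \<open>None\<close> is the failure state.\<close>

definition coset_step :: "'a option \<Rightarrow> 'a \<times> bool \<Rightarrow> 'a option" where
  "coset_step qo y = (case qo of None \<Rightarrow> None | Some q \<Rightarrow>
     if \<exists>q'\<in>witnesses. q \<otimes> signed_eval G [y] \<otimes> inv q' \<in> H
     then Some (SOME q'. q' \<in> witnesses \<and> q \<otimes> signed_eval G [y] \<otimes> inv q' \<in> H) else None)"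

definition coset_run :: "('a \<times> bool) list \<Rightarrow> 'a option" where
  "coset_run w = foldl coset_step (Some \<one>) w"

definition accepts :: "'a \<Rightarrow> 'a option \<Rightarrow> bool" where
  "accepts t qo = (case qo of None \<Rightarrow> False | Some q \<Rightarrow> q \<otimes> t \<in> H)"

lemma coset_run_snoc: "coset_run (w @ [y]) = coset_step (coset_run w) y"
  by (simp add: coset_run_def)

lemma coset_step_Some:
  assumes "coset_step qo y = Some q'"
  obtains q where "qo = Some q" "q' \<in> witnesses" "q \<otimes> signed_eval G [y] \<otimes> inv q' \<in> H"
proof -
  obtain q where q: "qo = Some q" using assms by (cases qo) (auto simp: coset_step_def)
  then have ex: "\<exists>q'. q' \<in> witnesses \<and> q \<otimes> signed_eval G [y] \<otimes> inv q' \<in> H"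
    using assms by (auto simp: coset_step_def split: if_splits)
  then have "q' = (SOME q'. q' \<in> witnesses \<and> q \<otimes> signed_eval G [y] \<otimes> inv q' \<in> H)"
    using assms q ex by (simp add: coset_step_def Bex_def)
  then show ?thesis using q that someI_ex[OF ex] by simp
qed

lemma coset_step_range: "coset_step qo y \<in> insert None (Some ` witnesses)"
  by (cases "coset_step qo y") (auto elim: coset_step_Some)

lemma coset_run_range: "coset_run w \<in> insert None (Some ` witnesses)"
proof (cases w rule: rev_exhaust)
  case (snoc w' y)
  then show ?thesis using coset_step_range by (simp add: coset_run_snoc)
qed (simp add: coset_run_def witnesses_def)

lemma coset_run_Some_closed: "coset_run w = Some q \<Longrightarrow> q \<in> carrier G"
  using coset_run_range[of w] witnesses_closed by auto

lemma coset_run_Some: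
  "fst ` set w \<subseteq> carrier G \<Longrightarrow> coset_run w = Some q \<Longrightarrow> signed_eval G w \<otimes> inv q \<in> H"
proof (induction w arbitrary: q rule: rev_induct)
  case Nil
  then show ?case using H_one by (auto simp: coset_run_def)
next
  case (snoc y w)
  obtain q0 where q0: "coset_run w = Some q0" "q0 \<otimes> signed_eval G [y] \<otimes> inv q \<in> H"
    using snoc.prems(2) by (auto simp: coset_run_snoc elim: coset_step_Some)
  have carr: "fst ` set w \<subseteq> carrier G" "fst y \<in> carrier G" "q0 \<in> carrier G" "q \<in> carrier G"
    using snoc.prems q0(1) coset_run_Some_closed by auto
  then have "signed_eval G (w @ [y]) \<otimes> inv q =
      (signed_eval G w \<otimes> inv q0) \<otimes> (q0 \<otimes> signed_eval G [y] \<otimes> inv q)"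
    by (simp add: signed_eval_append m_assoc)
  then show ?case using H_mult snoc.IH[OF carr(1) q0(1)] q0(2) by simp
qed

lemma coset_run_defined:
  "fst ` set w \<subseteq> carrier G \<Longrightarrow> \<forall>p. prefix p w \<longrightarrow> (\<exists>q\<in>witnesses. signed_eval G p \<otimes> inv q \<in> H) \<Longrightarrow>
     coset_run w \<noteq> None"
proof (induction w rule: rev_induct)
  case (snoc y w)
  have "fst ` set w \<subseteq> carrier G" using snoc.prems(1) by auto
  then have "coset_run w \<noteq> None"
    using snoc.IH snoc.prems(2) by (meson prefix_order.trans prefix_snoc)
  then obtain q where q: "coset_run w = Some q" by blast
  obtain q' where q': "q' \<in> witnesses" "signed_eval G (w @ [y]) \<otimes> inv q' \<in> H"
    using snoc.prems(2) by auto
  have carr: "fst ` set w \<subseteq> carrier G" "fst y \<in> carrier G" "q \<in> carrier G" "q' \<in> carrier G"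
    using snoc.prems q q'(1) coset_run_Some_closed witnesses_closed by auto
  then have "q \<otimes> signed_eval G [y] \<otimes> inv q' =
      inv (signed_eval G w \<otimes> inv q) \<otimes> (signed_eval G (w @ [y]) \<otimes> inv q')"
    by (simp add: signed_eval_append m_assoc inv_mult_group)
  then have "q \<otimes> signed_eval G [y] \<otimes> inv q' \<in> H"
    using H_mult H_inv coset_run_Some[OF carr(1) q] q'(2) by simp
  then show ?case using q q'(1) by (auto simp: coset_run_snoc coset_step_def)
qed (simp add: coset_run_def)

text \<open>If \<open>g \<in> H\<close>, all prefixes of the normal form are witnessed, so the run does not fail.\<close>

lemma accepts_coset_run_iff:
  assumes "g \<in> carrier G"
  shows "accepts (rep g) (coset_run (normal_form (g \<otimes> inv (rep g)))) \<longleftrightarrow> g \<in> H"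
proof -
  define t where "t = rep g"
  define f where "f = normal_form (g \<otimes> inv t)"
  have t: "t \<in> carrier G" using assms by (simp add: t_def)
  have f: "fst ` set f \<subseteq> carrier G" "signed_eval G f = g \<otimes> inv t"
    using normal_form normal_form_closed mult_inv_rep_in_F[OF assms] by (auto simp: f_def t_def)
  show ?thesis
  proof
    assume "accepts (rep g) (coset_run (normal_form (g \<otimes> inv (rep g))))"
    then obtain q where q: "coset_run f = Some q" "q \<otimes> t \<in> H"
      by (cases "coset_run f") (auto simp: accepts_def f_def t_def)
    have "g = (signed_eval G f \<otimes> inv q) \<otimes> (q \<otimes> t)"
      using f assms t coset_run_Some_closed[OF q(1)] by (simp add: m_assoc)
    then show "g \<in> H" using H_mult coset_run_Some[OF f(1) q(1)] q(2) by metis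
  next
    assume "g \<in> H"
    then have "coset_run f \<noteq> None"
      using prefixes_witnessed_H coset_run_defined[OF f(1)]
      unfolding prefixes_witnessed_def f_def t_def by blast
    then obtain q where q: "coset_run f = Some q" by auto
    have "q \<otimes> t = inv (signed_eval G f \<otimes> inv q) \<otimes> g"
      using f assms t coset_run_Some_closed[OF q] by (simp add: m_assoc inv_mult_group)
    then have "q \<otimes> t \<in> H" using H_mult H_inv coset_run_Some[OF f(1) q] \<open>g \<in> H\<close> by metis
    then show "accepts (rep g) (coset_run (normal_form (g \<otimes> inv (rep g))))"
      using q by (simp add: accepts_def f_def t_def)
  qed
qed

end

section \<open>Relabelling the states and stack symbols of a DPDA\<close>

definition dpda_relabel :: "('q \<Rightarrow> 'p) \<Rightarrow> ('s \<Rightarrow> 'z) \<Rightarrow> ('q, 'a, 's) dpda \<Rightarrow> ('p, 'a, 'z) dpda" where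
  "dpda_relabel fq fs M =
     \<lparr>states = fq ` states M, sigma = sigma M, stack_syms = fs ` stack_syms M,
      init = fq (init M), init_stack = fs (init_stack M), final = fq ` final M,
      delta = (\<lambda>q a Z. if q \<in> fq ` states M \<and> Z \<in> fs ` stack_syms M
        then map_option (\<lambda>(p, \<alpha>). (fq p, map fs \<alpha>))
          (delta M (inv_into (states M) fq q) a (inv_into (stack_syms M) fs Z))
        else None)\<rparr>"

definition relabel_config ::
    "('q \<Rightarrow> 'p) \<Rightarrow> ('s \<Rightarrow> 'z) \<Rightarrow> 'q \<times> 'a list \<times> 's list \<Rightarrow> 'p \<times> 'a list \<times> 'z list" where
  "relabel_config fq fs = (\<lambda>(q, w, \<gamma>). (fq q, w, map fs \<gamma>))"

definition dpda_config :: "('q, 'a, 's) dpda \<Rightarrow> 'q \<times> 'a list \<times> 's list \<Rightarrow> bool" where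
  "dpda_config M = (\<lambda>(q, w, \<gamma>). q \<in> states M \<and> set \<gamma> \<subseteq> stack_syms M)"

locale dpda_relabelling =
  fixes M :: "('q, 'a, 's) dpda" and fq :: "'q \<Rightarrow> 'p" and fs :: "'s \<Rightarrow> 'z"
  assumes wf: "dpda_wf M"
    and inj_states: "inj_on fq (states M)" and inj_stack_syms: "inj_on fs (stack_syms M)"
begin

abbreviation "M' \<equiv> dpda_relabel fq fs M"
abbreviation "rc \<equiv> relabel_config fq fs"

lemma delta_Some_wf:
  "delta M q a Z = Some (p, \<alpha>) \<Longrightarrow>
     q \<in> states M \<and> Z \<in> stack_syms M \<and> (\<forall>x. a = Some x \<longrightarrow> x \<in> sigma M) \<and>
     p \<in> states M \<and> set \<alpha> \<subseteq> stack_syms M"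
  using wf unfolding dpda_wf_def by blast

lemma delta_relabel:
  "q \<in> states M \<Longrightarrow> Z \<in> stack_syms M \<Longrightarrow>
     delta M' (fq q) a (fs Z) = map_option (\<lambda>(p, \<alpha>). (fq p, map fs \<alpha>)) (delta M q a Z)"
  using inj_states inj_stack_syms by (simp add: dpda_relabel_def)

lemma delta_relabel_Some:
  assumes "delta M' q a Z = Some (p, \<alpha>)"
  obtains q0 Z0 p0 \<alpha>0 where "q0 \<in> states M" "Z0 \<in> stack_syms M" "q = fq q0" "Z = fs Z0"
    "delta M q0 a Z0 = Some (p0, \<alpha>0)" "p = fq p0" "\<alpha> = map fs \<alpha>0"
proof -
  have "q \<in> fq ` states M \<and> Z \<in> fs ` stack_syms M"
    using assms by (simp add: dpda_relabel_def split: if_splits)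
  then obtain q0 Z0 where q0: "q0 \<in> states M" "q = fq q0" and Z0: "Z0 \<in> stack_syms M" "Z = fs Z0"
    by blast
  moreover obtain p0 \<alpha>0 where "delta M q0 a Z0 = Some (p0, \<alpha>0)" "p = fq p0" "\<alpha> = map fs \<alpha>0"
    using assms delta_relabel[OF q0(1) Z0(1), of a] q0(2) Z0(2) by (cases "delta M q0 a Z0") auto
  ultimately show ?thesis using that by blast
qed

lemma dpda_relabel_simps:
  "states M' = fq ` states M" "sigma M' = sigma M" "stack_syms M' = fs ` stack_syms M"
  "init M' = fq (init M)" "init_stack M' = fs (init_stack M)" "final M' = fq ` final M"
  by (simp_all add: dpda_relabel_def)

lemma dpda_wf_relabel: "dpda_wf M'"
proof -
  have fin: "finite (states M)" "finite (sigma M)" "finite (stack_syms M)" "init M \<in> states M"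
      "init_stack M \<in> stack_syms M" "final M \<subseteq> states M"
    and det: "\<And>q Z a. delta M q None Z \<noteq> None \<Longrightarrow> delta M q (Some a) Z = None"
    using wf unfolding dpda_wf_def by blast+
  have det': "delta M' q (Some a) Z = None" if eps: "delta M' q None Z \<noteq> None" for q Z a
  proof -
    obtain p \<alpha> where "delta M' q None Z = Some (p, \<alpha>)" using eps by (cases "delta M' q None Z") auto
    then obtain q0 Z0 where "q0 \<in> states M" "Z0 \<in> stack_syms M" "q = fq q0" "Z = fs Z0"
        "delta M q0 None Z0 \<noteq> None"
      by (elim delta_relabel_Some) auto
    then show ?thesis using det delta_relabel by simp
  qed
  have trans': "q \<in> states M' \<and> Z \<in> stack_syms M' \<and> (\<forall>x. a = Some x \<longrightarrow> x \<in> sigma M') \<and>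
      p \<in> states M' \<and> set \<alpha> \<subseteq> stack_syms M'" if "delta M' q a Z = Some (p, \<alpha>)" for q a Z p \<alpha>
    using that by (elim delta_relabel_Some) (auto dest!: delta_Some_wf simp: dpda_relabel_simps)
  show ?thesis
    unfolding dpda_wf_def dpda_relabel_simps using fin det' trans' by (auto simp: dpda_relabel_simps)
qed

lemma dpda_step_relabel:
  "dpda_step M c c' \<Longrightarrow> dpda_config M c \<Longrightarrow> dpda_step M' (rc c) (rc c') \<and> dpda_config M c'"
proof (induction rule: dpda_step.induct)
  case (read q a Z p \<alpha> w \<gamma>)
  then show ?case using delta_Some_wf[OF read.hyps] delta_relabel[of q Z "Some a"]
    by (auto simp: relabel_config_def dpda_config_def intro!: dpda_step.read)
next
  case (eps q Z p \<alpha> w \<gamma>)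
  then show ?case using delta_Some_wf[OF eps.hyps] delta_relabel[of q Z None]
    by (auto simp: relabel_config_def dpda_config_def intro!: dpda_step.eps)
qed

lemma dpda_step_relabel_inv:
  assumes "dpda_step M' (rc c) d" "dpda_config M c"
  shows "\<exists>c'. d = rc c' \<and> dpda_step M c c'"
proof -
  obtain q w \<gamma> where c: "c = (q, w, \<gamma>)" by (cases c)
  have cfg: "q \<in> states M" "set \<gamma> \<subseteq> stack_syms M" using assms(2) by (auto simp: c dpda_config_def)
  from assms(1) show ?thesis
  proof cases
    case (read q' a Z' p' \<alpha>' w' \<gamma>')
    then obtain Z \<gamma>0 where \<gamma>: "\<gamma> = Z # \<gamma>0" "q' = fq q" "Z' = fs Z" "\<gamma>' = map fs \<gamma>0" "w = a # w'"
      by (cases \<gamma>) (auto simp: c relabel_config_def)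
    with cfg obtain p \<alpha> where "delta M q (Some a) Z = Some (p, \<alpha>)" "p' = fq p" "\<alpha>' = map fs \<alpha>"
      using read(3) delta_relabel[of q Z "Some a"] by (cases "delta M q (Some a) Z") auto
    then have "d = rc (p, w', \<alpha> @ \<gamma>0)" "dpda_step M c (p, w', \<alpha> @ \<gamma>0)"
      using read(2) \<gamma> by (auto simp: c relabel_config_def intro: dpda_step.read)
    then show ?thesis by blast
  next
    case (eps q' Z' p' \<alpha>' w' \<gamma>')
    then obtain Z \<gamma>0 where \<gamma>: "\<gamma> = Z # \<gamma>0" "q' = fq q" "Z' = fs Z" "\<gamma>' = map fs \<gamma>0" "w = w'"
      by (cases \<gamma>) (auto simp: c relabel_config_def)
    with cfg obtain p \<alpha> where "delta M q None Z = Some (p, \<alpha>)" "p' = fq p" "\<alpha>' = map fs \<alpha>"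
      using eps(3) delta_relabel[of q Z None] by (cases "delta M q None Z") auto
    then have "d = rc (p, w', \<alpha> @ \<gamma>0)" "dpda_step M c (p, w', \<alpha> @ \<gamma>0)"
      using eps(2) \<gamma> by (auto simp: c relabel_config_def intro: dpda_step.eps)
    then show ?thesis by blast
  qed
qed

lemma dpda_steps_relabel:
  "(dpda_step M)\<^sup>*\<^sup>* c c' \<Longrightarrow> dpda_config M c \<Longrightarrow> (dpda_step M')\<^sup>*\<^sup>* (rc c) (rc c') \<and> dpda_config M c'"
  by (induction rule: rtranclp_induct) (auto dest: dpda_step_relabel)

lemma dpda_steps_relabel_inv:
  "(dpda_step M')\<^sup>*\<^sup>* (rc c) d \<Longrightarrow> dpda_config M c \<Longrightarrow>
     \<exists>c'. d = rc c' \<and> dpda_config M c' \<and> (dpda_step M)\<^sup>*\<^sup>* c c'"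
proof (induction rule: rtranclp_induct)
  case (step d d')
  then obtain c' where c': "d = rc c'" "dpda_config M c'" "(dpda_step M)\<^sup>*\<^sup>* c c'" by blast
  then obtain c'' where c'': "d' = rc c''" "dpda_step M c' c''"
    using dpda_step_relabel_inv step.hyps(2) by blast
  have "dpda_config M c''" using dpda_step_relabel[OF c''(2) c'(2)] by blast
  with c'' c'(3) show ?case by (blast intro: rtranclp.rtrancl_into_rtrancl)
qed blast

lemma dpda_lang_relabel: "dpda_lang M' = dpda_lang M"
proof -
  have init: "dpda_config M (init M, w, [init_stack M])" for w :: "'a list"
    using wf by (simp add: dpda_config_def dpda_wf_def)
  have rc_init: "rc (init M, w, [init_stack M]) = (init M', w, [init_stack M'])" for w
    by (simp add: relabel_config_def dpda_relabel_def)
  have final: "fq p \<in> final M' \<longleftrightarrow> p \<in> final M" if "p \<in> states M" for p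
    using that wf inj_states by (auto simp: dpda_relabel_def dpda_wf_def dest: inj_onD)
  show ?thesis
  proof (intro equalityI subsetI)
    fix w assume "w \<in> dpda_lang M'"
    then obtain p \<gamma> where w: "set w \<subseteq> sigma M" "p \<in> final M'"
      and "(dpda_step M')\<^sup>*\<^sup>* (rc (init M, w, [init_stack M])) (p, [], \<gamma>)"
      unfolding dpda_lang_def rc_init by (auto simp: dpda_relabel_def)
    then obtain q \<gamma>' where "(dpda_step M)\<^sup>*\<^sup>* (init M, w, [init_stack M]) (q, [], \<gamma>')"
        "q \<in> states M" "p = fq q"
      using dpda_steps_relabel_inv[OF _ init] by (force simp: relabel_config_def dpda_config_def)
    then show "w \<in> dpda_lang M" using w final unfolding dpda_lang_def by blast
  next
    fix w assume "w \<in> dpda_lang M"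
    then obtain p \<gamma> where w: "set w \<subseteq> sigma M" "p \<in> final M"
      and "(dpda_step M)\<^sup>*\<^sup>* (init M, w, [init_stack M]) (p, [], \<gamma>)"
      unfolding dpda_lang_def by blast
    then have "(dpda_step M')\<^sup>*\<^sup>* (rc (init M, w, [init_stack M])) (rc (p, [], \<gamma>))"
      using dpda_steps_relabel[OF _ init] by blast
    then have "(dpda_step M')\<^sup>*\<^sup>* (init M', w, [init_stack M']) (fq p, [], map fs \<gamma>)"
      unfolding rc_init by (simp add: relabel_config_def)
    moreover have "fq p \<in> final M'" using w(2) by (simp add: dpda_relabel_def)
    ultimately show "w \<in> dpda_lang M'" using w(1) unfolding dpda_lang_def by (auto simp: dpda_relabel_def)
  qed
qed

end

lemma det_context_free_dpda_lang:
  fixes M :: "('q, 'a, 's) dpda"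
  assumes "dpda_wf M"
  shows "det_context_free (sigma M) (dpda_lang M)"
proof -
  obtain fq :: "'q \<Rightarrow> nat" and fs :: "'s \<Rightarrow> nat"
    where "inj_on fq (states M)" "inj_on fs (stack_syms M)"
    using assms finite_imp_inj_to_nat_seg unfolding dpda_wf_def by metis
  then interpret dpda_relabelling M fq fs using assms by unfold_locales
  show ?thesis unfolding det_context_free_def
    using dpda_wf_relabel dpda_lang_relabel by (intro exI[of _ M']) (simp add: dpda_relabel_def)
qed

section \<open>The pushdown automaton\<close>

text \<open>In a control state \<open>Inl (t, b)\<close> the input \<open>u\<close> read so far satisfies \<open>t = rep u\<close> and
  \<open>b \<longleftrightarrow> u \<in> H\<close>; a state \<open>Inr (t, ys)\<close> still has to push the letters \<open>ys\<close> of the normal form of a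
  Schreier generator. The stack holds the normal form of \<open>u (rep u)\<inverse>\<close>, last letter on top, each
  letter annotated with the state of the coset automaton after it, above the bottom marker \<open>None\<close>.\<close>

type_synonym 'a gwp_state = "'a \<times> bool + 'a \<times> ('a \<times> bool) list"
type_synonym 'a gwp_symbol = "(('a \<times> bool) \<times> 'a option) option"

context gwp_setting
begin

definition stack_letters :: "'a set" where
  "stack_letters = (\<Union>t\<in>transversal. \<Union>x\<in>A. fst ` set (normal_form (schreier t x)))"

definition pending_words :: "('a \<times> bool) list set" where
  "pending_words = insert [] {ys. \<exists>t\<in>transversal. \<exists>x\<in>A. suffix ys (normal_form (schreier t x))}"

definition stack_alphabet :: "'a gwp_symbol set" where
  "stack_alphabet = insert None (Some ` ((stack_letters \<times> UNIV) \<times> insert None (Some ` witnesses)))"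

definition control_states :: "'a gwp_state set" where
  "control_states = Inl ` (transversal \<times> UNIV) \<union> Inr ` (transversal \<times> pending_words)"

definition top_state :: "'a gwp_symbol \<Rightarrow> 'a option" where
  "top_state Z = (case Z of None \<Rightarrow> Some \<one> | Some (y, qo) \<Rightarrow> qo)"

definition push_letter :: "'a \<times> bool \<Rightarrow> 'a gwp_symbol \<Rightarrow> 'a gwp_symbol list" where
  "push_letter y Z = (if \<exists>qo. Z = Some (inv_letter y, qo) then []
     else [Some (y, coset_step (top_state Z) y), Z])"

fun gwp_delta ::
    "'a gwp_state \<Rightarrow> 'a option \<Rightarrow> 'a gwp_symbol \<Rightarrow> ('a gwp_state \<times> 'a gwp_symbol list) option" where
  "gwp_delta (Inl (t, b)) (Some x) Z =
     (if t \<in> transversal \<and> x \<in> A \<and> Z \<in> stack_alphabet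
      then Some (Inr (rep (t \<otimes> x), normal_form (schreier t x)), [Z]) else None)"
| "gwp_delta (Inl (t, b)) None Z = None"
| "gwp_delta (Inr (t, [])) None Z =
     (if t \<in> transversal \<and> Z \<in> stack_alphabet
      then Some (Inl (t, accepts t (top_state Z)), [Z]) else None)"
| "gwp_delta (Inr (t, y # ys)) None Z =
     (if t \<in> transversal \<and> y # ys \<in> pending_words \<and> Z \<in> stack_alphabet
      then Some (Inr (t, ys), push_letter y Z) else None)"
| "gwp_delta (Inr tys) (Some x) Z = None"

definition gwp_dpda :: "('a gwp_state, 'a, 'a gwp_symbol) dpda" where
  "gwp_dpda = \<lparr>states = control_states, sigma = A, stack_syms = stack_alphabet,
     init = Inl (\<one>, True), init_stack = None, final = Inl ` (transversal \<times> {True}),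
     delta = gwp_delta\<rparr>"

lemma gwp_dpda_simps [simp]:
  "states gwp_dpda = control_states" "sigma gwp_dpda = A" "stack_syms gwp_dpda = stack_alphabet"
  "init gwp_dpda = Inl (\<one>, True)" "init_stack gwp_dpda = None"
  "final gwp_dpda = Inl ` (transversal \<times> {True})" "delta gwp_dpda = gwp_delta"
  by (simp_all add: gwp_dpda_def)

definition stack_of :: "('a \<times> bool) list \<Rightarrow> 'a gwp_symbol list" where
  "stack_of f = foldl (\<lambda>\<gamma> y. Some (y, coset_step (top_state (hd \<gamma>)) y) # \<gamma>) [None] f"

lemma stack_of_Nil [simp]: "stack_of [] = [None]"
  by (simp add: stack_of_def)

lemma stack_of_snoc [simp]:
  "stack_of (f @ [y]) = Some (y, coset_step (top_state (hd (stack_of f))) y) # stack_of f"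
  by (simp add: stack_of_def)

lemma top_state_stack_of: "top_state (hd (stack_of f)) = coset_run f"
  by (induction f rule: rev_induct) (simp_all add: top_state_def coset_run_def)

lemma stack_of_hd_tl: "stack_of f = hd (stack_of f) # tl (stack_of f)"
  by (cases f rule: rev_cases) simp_all

lemma stack_of_reduce_snoc:
  "push_letter y (hd (stack_of f)) @ tl (stack_of f) = stack_of (reduce_snoc f y)"
proof (cases "f \<noteq> [] \<and> last f = inv_letter y")
  case True
  then obtain f' where "f = f' @ [inv_letter y]" by (metis append_butlast_last_id)
  then show ?thesis by (simp add: push_letter_def reduce_snoc_def)
next
  case False
  then have "\<nexists>qo. hd (stack_of f) = Some (inv_letter y, qo)"
    by (cases f rule: rev_cases) auto
  then show ?thesis using stack_of_hd_tl[of f]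
    unfolding reduce_snoc_def if_not_P[OF False] by (simp add: push_letter_def top_state_stack_of)
qed

lemma finite_stack_letters: "finite stack_letters"
  unfolding stack_letters_def using finite_transversal finite_A by simp

lemma finite_pending_words: "finite pending_words"
proof -
  have "pending_words \<subseteq> insert [] (\<Union>t\<in>transversal. \<Union>x\<in>A. set (suffixes (normal_form (schreier t x))))"
    unfolding pending_words_def by auto
  moreover have "finite (\<Union>t\<in>transversal. \<Union>x\<in>A. set (suffixes (normal_form (schreier t x))))"
    using finite_transversal finite_A by simp
  ultimately show ?thesis using finite_subset by blast
qed

lemma pending_words_Cons: "y # ys \<in> pending_words \<Longrightarrow> ys \<in> pending_words \<and> fst y \<in> stack_letters"
  unfolding pending_words_def stack_letters_def
  by (fastforce dest: suffix_ConsD set_mono_suffix)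

lemma pending_words_letters: "ys \<in> pending_words \<Longrightarrow> fst ` set ys \<subseteq> stack_letters"
  by (induction ys) (auto dest: pending_words_Cons)

lemma normal_form_schreier_pending:
  "t \<in> transversal \<Longrightarrow> x \<in> A \<Longrightarrow> normal_form (schreier t x) \<in> pending_words"
  unfolding pending_words_def by blast

lemma None_in_stack_alphabet [simp]: "None \<in> stack_alphabet"
  by (simp add: stack_alphabet_def)

lemma Some_in_stack_alphabet [simp]:
  "Some (y, qo) \<in> stack_alphabet \<longleftrightarrow> fst y \<in> stack_letters \<and> qo \<in> insert None (Some ` witnesses)"
  by (cases y) (auto simp: stack_alphabet_def)

lemma stack_of_in_alphabet: "fst ` set f \<subseteq> stack_letters \<Longrightarrow> set (stack_of f) \<subseteq> stack_alphabet"
proof (induction f rule: rev_induct)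
  case (snoc y f)
  then show ?case using coset_step_range by simp
qed simp

lemma hd_stack_of_in_alphabet: "fst ` set f \<subseteq> stack_letters \<Longrightarrow> hd (stack_of f) \<in> stack_alphabet"
  using stack_of_in_alphabet stack_of_hd_tl by (metis list.set_intros(1) subsetD)

lemma gwp_delta_Some:
  "gwp_delta q a Z = Some (p, \<alpha>) \<Longrightarrow>
     q \<in> control_states \<and> Z \<in> stack_alphabet \<and> (\<forall>x. a = Some x \<longrightarrow> x \<in> A) \<and>
     p \<in> control_states \<and> set \<alpha> \<subseteq> stack_alphabet"
proof (induction q a Z rule: gwp_delta.induct)
  case (1 t b x Z)
  then have "rep (t \<otimes> x) \<in> transversal"
    using transversal_closed A_closed by (auto intro: rep_in_transversal split: if_splits)
  then show ?case using 1 normal_form_schreier_pending[of t x]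
    by (auto simp: control_states_def split: if_splits)
next
  case (3 t Z)
  then show ?case by (auto simp: control_states_def pending_words_def split: if_splits)
next
  case (4 t y ys Z)
  then show ?case using pending_words_Cons[of y ys] coset_step_range[of "top_state Z" y]
    by (auto simp: control_states_def push_letter_def split: if_splits)
qed auto

lemma dpda_wf_gwp_dpda: "dpda_wf gwp_dpda"
proof -
  have "gwp_delta q None Z \<noteq> None \<Longrightarrow> gwp_delta q (Some a) Z = None" for q Z a
    by (cases "(q, None :: 'a option, Z)" rule: gwp_delta.cases) auto
  moreover have "Inl (\<one>, True) \<in> control_states"
    using rep_in_transversal[OF one_closed] by (auto simp: control_states_def)
  ultimately show ?thesis unfolding dpda_wf_def
    using finite_transversal finite_pending_words finite_stack_letters finite_witnesses finite_A
      gwp_delta_Some by (auto simp: control_states_def stack_alphabet_def)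
qed


definition gwp_invariant :: "'a list \<Rightarrow> 'a gwp_state \<times> 'a list \<times> 'a gwp_symbol list \<Rightarrow> bool" where
  "gwp_invariant w = (\<lambda>(q, w', \<gamma>). \<exists>u f. w = u @ w' \<and> \<gamma> = stack_of f \<and>
     (case q of
       Inl (t, b) \<Rightarrow> t = rep (word_eval G u) \<and> f = normal_form (word_eval G u \<otimes> inv t) \<and>
         b = (word_eval G u \<in> H)
     | Inr (t, ys) \<Rightarrow> t = rep (word_eval G u) \<and>
         foldl reduce_snoc f ys = normal_form (word_eval G u \<otimes> inv t)))"

lemma gwp_invariant_read:
  assumes w: "set w \<subseteq> A" and inv: "gwp_invariant w (q, a # rest, Z # \<gamma>)"
    and delta: "gwp_delta q (Some a) Z = Some (p, \<alpha>)"
  shows "gwp_invariant w (p, rest, \<alpha> @ \<gamma>)"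
proof -
  obtain t b where q: "q = Inl (t, b)" using delta by (cases q) auto
  with delta have p: "p = Inr (rep (t \<otimes> a), normal_form (schreier t a))" "\<alpha> = [Z]"
    by (auto split: if_splits)
  from inv obtain u f where u: "w = u @ a # rest" "Z # \<gamma> = stack_of f" "t = rep (word_eval G u)"
      "f = normal_form (word_eval G u \<otimes> inv t)"
    by (auto simp: gwp_invariant_def q)
  have "set u \<subseteq> carrier G" "a \<in> carrier G" using w u(1) A_closed by auto
  then have "rep (t \<otimes> a) = rep (word_eval G (u @ [a])) \<and>
      foldl reduce_snoc f (normal_form (schreier t a)) =
        normal_form (word_eval G (u @ [a]) \<otimes> inv (rep (t \<otimes> a)))"
    by (simp add: u(3,4) word_eval_snoc rep_mult_rep normal_form_mult word_eval_closed)
  then show ?thesis using u(1,2) by (auto simp: gwp_invariant_def p)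
qed

lemma gwp_invariant_eps:
  assumes w: "set w \<subseteq> A" and inv: "gwp_invariant w (q, rest, Z # \<gamma>)"
    and delta: "gwp_delta q None Z = Some (p, \<alpha>)"
  shows "gwp_invariant w (p, rest, \<alpha> @ \<gamma>)"
proof -
  obtain t ys where q: "q = Inr (t, ys)" using delta by (cases q) auto
  from inv obtain u f where u: "w = u @ rest" "Z # \<gamma> = stack_of f" "t = rep (word_eval G u)"
      "foldl reduce_snoc f ys = normal_form (word_eval G u \<otimes> inv t)"
    by (auto simp: gwp_invariant_def q)
  have Z: "Z = hd (stack_of f)" "\<gamma> = tl (stack_of f)" using u(2) by (metis list.sel)+
  show ?thesis
  proof (cases ys)
    case Nil
    with delta q have p: "p = Inl (t, accepts t (top_state Z))" "\<alpha> = [Z]" by (auto split: if_splits)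
    have "word_eval G u \<in> carrier G" using w u(1) A_closed by (auto intro: word_eval_closed)
    then have "accepts t (top_state Z) = (word_eval G u \<in> H)"
      using accepts_coset_run_iff u(3,4) Nil by (simp add: Z top_state_stack_of)
    then show ?thesis using u Nil by (auto simp: gwp_invariant_def p)
  next
    case (Cons y ys')
    with delta q have p: "p = Inr (t, ys')" "\<alpha> = push_letter y Z" by (auto split: if_splits)
    have "\<alpha> @ \<gamma> = stack_of (reduce_snoc f y)" using stack_of_reduce_snoc by (simp add: p Z)
    then show ?thesis using u Cons by (auto simp: gwp_invariant_def p)
  qed
qed

lemma gwp_invariant_step:
  assumes "set w \<subseteq> A" "gwp_invariant w c" "dpda_step gwp_dpda c c'"
  shows "gwp_invariant w c'"
  using assms(3) by cases (use assms gwp_invariant_read gwp_invariant_eps in auto)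

lemma gwp_invariant_reachable:
  assumes "set w \<subseteq> A" "(dpda_step gwp_dpda)\<^sup>*\<^sup>* (Inl (\<one>, True), w, [None]) c"
  shows "gwp_invariant w c"
  using assms(2)
proof (induction rule: rtranclp_induct)
  case base
  show ?case unfolding gwp_invariant_def
    by (intro case_prodI exI[of _ "[]"]) (simp add: word_eval_def H_one)
next
  case (step c c')
  then show ?case using gwp_invariant_step assms(1) by blast
qed

lemma stack_letters_normal_form:
  "set u \<subseteq> A \<Longrightarrow>
     fst ` set (normal_form (word_eval G u \<otimes> inv (rep (word_eval G u)))) \<subseteq> stack_letters"
proof (induction u rule: rev_induct)
  case Nil
  show ?case by (simp add: word_eval_def)
next
  case (snoc x u)
  have carr: "set u \<subseteq> carrier G" "x \<in> carrier G" using snoc.prems A_closed by auto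
  have "rep (word_eval G u) \<in> transversal" using carr by (simp add: rep_in_transversal word_eval_closed)
  then have "fst ` set (normal_form (schreier (rep (word_eval G u)) x)) \<subseteq> stack_letters"
    using snoc.prems unfolding stack_letters_def by auto
  then show ?case using snoc carr
    by (simp add: word_eval_snoc normal_form_mult word_eval_closed letters_foldl_reduce_snoc)
qed

lemma dpda_step_stack_of_read:
  "gwp_delta q (Some x) (hd (stack_of f)) = Some (p, \<alpha>) \<Longrightarrow>
     dpda_step gwp_dpda (q, x # w, stack_of f) (p, w, \<alpha> @ tl (stack_of f))"
  using dpda_step.read[of gwp_dpda] stack_of_hd_tl[of f] by (metis gwp_dpda_simps(7))

lemma dpda_step_stack_of_eps:
  "gwp_delta q None (hd (stack_of f)) = Some (p, \<alpha>) \<Longrightarrow>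
     dpda_step gwp_dpda (q, w, stack_of f) (p, w, \<alpha> @ tl (stack_of f))"
  using dpda_step.eps[of gwp_dpda] stack_of_hd_tl[of f] by (metis gwp_dpda_simps(7))

lemma gwp_dpda_pushes:
  "t \<in> transversal \<Longrightarrow> ys \<in> pending_words \<Longrightarrow> fst ` set f \<subseteq> stack_letters \<Longrightarrow>
     (dpda_step gwp_dpda)\<^sup>*\<^sup>* (Inr (t, ys), rest, stack_of f)
       (Inr (t, []), rest, stack_of (foldl reduce_snoc f ys))"
proof (induction ys arbitrary: f)
  case (Cons y ys)
  have y: "ys \<in> pending_words" "fst y \<in> stack_letters" using pending_words_Cons Cons.prems(2) by auto
  have "gwp_delta (Inr (t, y # ys)) None (hd (stack_of f)) =
      Some (Inr (t, ys), push_letter y (hd (stack_of f)))"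
    using Cons.prems hd_stack_of_in_alphabet by simp
  then have "dpda_step gwp_dpda (Inr (t, y # ys), rest, stack_of f)
      (Inr (t, ys), rest, stack_of (reduce_snoc f y))"
    using stack_of_reduce_snoc[of y f] by (metis dpda_step_stack_of_eps)
  moreover have "fst ` set (reduce_snoc f y) \<subseteq> stack_letters"
    using set_reduce_snoc[of f y] Cons.prems(3) y(2) by auto
  ultimately show ?case using Cons.IH[OF Cons.prems(1) y(1)] by (simp add: converse_rtranclp_into_rtranclp)
qed simp


lemma gwp_dpda_reads_letter:
  assumes g: "g \<in> carrier G" and x: "x \<in> A"
    and letters: "fst ` set (normal_form (g \<otimes> inv (rep g))) \<subseteq> stack_letters"
  shows "(dpda_step gwp_dpda)\<^sup>*\<^sup>* (Inl (rep g, b), x # rest, stack_of (normal_form (g \<otimes> inv (rep g))))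
    (Inl (rep (g \<otimes> x), g \<otimes> x \<in> H), rest, stack_of (normal_form (g \<otimes> x \<otimes> inv (rep (g \<otimes> x)))))"
proof -
  define t' where "t' = rep (g \<otimes> x)"
  define f where "f = normal_form (g \<otimes> inv (rep g))"
  define u where "u = normal_form (schreier (rep g) x)"
  define f' where "f' = normal_form (g \<otimes> x \<otimes> inv t')"
  have xc: "x \<in> carrier G" using x A_closed by auto
  have t: "rep g \<in> transversal" "t' \<in> transversal"
    using g xc by (simp_all add: t'_def rep_in_transversal)
  have f': "f' = foldl reduce_snoc f u" using normal_form_mult[OF g xc] by (simp add: f'_def f_def u_def t'_def)
  have u: "u \<in> pending_words" using normal_form_schreier_pending[OF t(1) x] by (simp add: u_def)
  have f'_letters: "fst ` set f' \<subseteq> stack_letters"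
    using letters pending_words_letters[OF u] by (simp add: f' f_def letters_foldl_reduce_snoc)
  have "gwp_delta (Inl (rep g, b)) (Some x) (hd (stack_of f)) = Some (Inr (t', u), [hd (stack_of f)])"
    using t(1) x hd_stack_of_in_alphabet letters by (simp add: f_def u_def t'_def rep_mult_rep g xc)
  then have "dpda_step gwp_dpda (Inl (rep g, b), x # rest, stack_of f) (Inr (t', u), rest, stack_of f)"
    using dpda_step_stack_of_read stack_of_hd_tl by fastforce
  moreover have "(dpda_step gwp_dpda)\<^sup>*\<^sup>* (Inr (t', u), rest, stack_of f) (Inr (t', []), rest, stack_of f')"
    using gwp_dpda_pushes[OF t(2) u] letters by (simp add: f' f_def)
  moreover have "accepts t' (top_state (hd (stack_of f'))) \<longleftrightarrow> g \<otimes> x \<in> H"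
    using accepts_coset_run_iff g xc by (simp add: top_state_stack_of f'_def t'_def)
  then have "gwp_delta (Inr (t', [])) None (hd (stack_of f')) =
      Some (Inl (t', g \<otimes> x \<in> H), [hd (stack_of f')])"
    using t(2) hd_stack_of_in_alphabet[OF f'_letters] by simp
  then have "dpda_step gwp_dpda (Inr (t', []), rest, stack_of f') (Inl (t', g \<otimes> x \<in> H), rest, stack_of f')"
    using dpda_step_stack_of_eps stack_of_hd_tl by fastforce
  ultimately show ?thesis unfolding f_def f'_def t'_def
    by (meson converse_rtranclp_into_rtranclp rtranclp.rtrancl_into_rtrancl)
qed

lemma gwp_dpda_reads_word:
  assumes "set u \<subseteq> A"
  shows "(dpda_step gwp_dpda)\<^sup>*\<^sup>* (Inl (\<one>, True), u @ rest, [None])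
    (Inl (rep (word_eval G u), word_eval G u \<in> H), rest,
     stack_of (normal_form (word_eval G u \<otimes> inv (rep (word_eval G u)))))"
  using assms
proof (induction u arbitrary: rest rule: rev_induct)
  case Nil
  show ?case by (simp add: word_eval_def H_one)
next
  case (snoc x u)
  have carr: "set u \<subseteq> carrier G" "x \<in> carrier G" using snoc.prems A_closed by auto
  then show ?case
    using snoc.IH[of "x # rest"] snoc.prems stack_letters_normal_form[of u]
      gwp_dpda_reads_letter[of "word_eval G u" x "word_eval G u \<in> H" rest]
    by (simp add: word_eval_snoc word_eval_closed)
qed

lemma dpda_lang_gwp_dpda: "dpda_lang gwp_dpda = GWP G H A"
proof (intro equalityI subsetI)
  fix w assume "w \<in> dpda_lang gwp_dpda"
  then obtain t \<gamma> where w: "set w \<subseteq> A"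
    and "(dpda_step gwp_dpda)\<^sup>*\<^sup>* (Inl (\<one>, True), w, [None]) (Inl (t, True), [], \<gamma>)"
    unfolding dpda_lang_def by auto
  then have "gwp_invariant w (Inl (t, True), [], \<gamma>)" by (rule gwp_invariant_reachable)
  then show "w \<in> GWP G H A" using w by (auto simp: gwp_invariant_def GWP_def)
next
  fix w assume "w \<in> GWP G H A"
  then have w: "set w \<subseteq> A" "word_eval G w \<in> H" by (auto simp: GWP_def)
  then have "rep (word_eval G w) \<in> transversal"
    using A_closed by (auto intro: rep_in_transversal word_eval_closed)
  then show "w \<in> dpda_lang gwp_dpda"
    using gwp_dpda_reads_word[OF w(1), of "[]"] w unfolding dpda_lang_def by auto
qed

end

theorem theorem1p3:
  fixes G :: "('g, 'b) monoid_scheme" and A H :: "'g set"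
  assumes "group G"
    and "virtually_free G"
    and "finite A" and "A \<subseteq> carrier G"
    and "\<forall>x\<in>A. inv\<^bsub>G\<^esub> x \<in> A"
    and "generate G A = carrier G"
    and "fin_gen_subgroup G H"
  shows "det_context_free A (GWP G H A)"
proof -
  interpret group G by (rule assms(1))
  obtain F B where F: "subgroup F G" "finite (rcosets\<^bsub>G\<^esub> F)" "free_basis (G\<lparr>carrier := F\<rparr>) B"
    using assms(2) unfolding virtually_free_def free_group_def by blast
  obtain S where S: "subgroup H G" "finite S" "generate G S = H"
    using assms(7) unfolding fin_gen_subgroup_def by blast
  have "gwp_setting G F B A H S"
    using F S assms(1,3,4) free_basis_subgroup[OF F(1,3)]
    by (intro gwp_setting.intro virtually_free_group.intro finite_index_subgroup.intro
        gwp_setting_axioms.intro virtually_free_group_axioms.intro finite_index_subgroup_axioms.intro)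
      simp_all
  then interpret gwp_setting G F B A H S .
  show ?thesis
    using det_context_free_dpda_lang[OF dpda_wf_gwp_dpda] dpda_lang_gwp_dpda by simp
qed
end
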